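(* Consider $n\ge2$ agents in $\mathbb{R}^d$ ($d\ge2$) with undirected graph $\mathcal{G}=(\mathcal{V},\mathcal{E})$, constant desired bearings $\{g_{ij}^*\}_{(i,j)\in\mathcal{E}}$, leaders $\mathcal{V}_\ell=\{1,\dots,n_\ell\}$ with positions $p_i(t)$, $\dot p_i=v_i^*$, and followers $\mathcal{V}_f=\{n_\ell+1,\dots,n\}$, and suppose the standing assumption below holds. Let $p^*(t)$ be the target formation, so that $p_\ell^*(t)=p_\ell(t)$ and $p_f^*(t)=-\mathcal{L}_{ff}^{-1}\mathcal{L}_{f\ell}p_\ell(t)$. If the velocity of each leader is constant and equal to a common vector, $v_i^*=\mathbf{v}_c\in\mathbb{R}^d$ for all $i\in\mathcal{V}_\ell$, then $\dot c(p^*(t))\equiv\mathbf{v}_c$ and $\dot s(p^*(t))\equiv 0$.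
   Context: $P_x=I_d-\frac{xx^T}{\|x\|^2}$. The bearing Laplacian $\mathcal{L}\in\mathbb{R}^{dn\times dn}$ has $(i,j)$-th $d\times d$ block $0$ if $i\ne j,(i,j)\notin\mathcal{E}$; $-P_{g_{ij}^*}$ if $i\ne j,(i,j)\in\mathcal{E}$; $\sum_{k\in\mathcal{N}_i}P_{g_{ik}^*}$ if $i=j$; partitioned into leader/follower blocks $\mathcal{L}_{\ell\ell},\mathcal{L}_{\ell f},\mathcal{L}_{f\ell},\mathcal{L}_{ff}$. Target formation: $p^*(t)\in\mathbb{R}^{dn}$ with $p_i^*(t)=p_i(t)$ for leaders and $(p_j^*-p_i^* )/\|p_j^*-p_i^*\|=g_{ij}^*$ for all edges. Infinitesimal bearing rigidity of $q$: with $g_k=(q_j-q_i)/\|q_j-q_i\|$ for the $k$-th oriented edge, $F_B(q)=[g_1^T,\dots,g_m^T]^T$, $R_B=\partial F_B/\partial q$, require $\mathrm{Null}(R_B(q))=\mathrm{span}\{\mathbf{1}_n\otimes I_d,q\}$. Standing assumption: the target formation exists for all $t$, is infinitesimally bearing rigid, and $n_\ell\ge2$; then $\mathcal{L}_{ff}$ is positive definite. Centroid and scale of $q\in\mathbb{R}^{dn}$: $c(q)=\frac1n\sum_{i=1}^n q_i$, $s(q)=\sqrt{\frac1n\sum_{i=1}^n\|q_i-c(q)\|^2}=\frac{1}{\sqrt n}\|q-\mathbf{1}_n\otimes c(q)\|$. *)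

theory Defs
  imports "HOL-Analysis.Analysis"
begin

text \<open>Agents are indexed by a finite type 'n (n = CARD('n)), positions live in real^'d.
  A stacked configuration q in R^{dn} is an element of real^'d^'n, q $ i being agent i.\<close>

definition proj_mat :: "real^'d \<Rightarrow> real^'d^'d" where
  "proj_mat x = mat 1 - (1 / (norm x)\<^sup>2) *\<^sub>R (\<chi> a b. x $ a * x $ b)"

text \<open>Bearing function F_B: for each ordered pair (i,j) in E the bearing of q_j relative to q_i;
  non-edges give the zero vector (zero rows do not change the null space of R_B).\<close>
definition bearing_fun :: "('n::finite \<times> 'n) set \<Rightarrow> real^'d^'n \<Rightarrow> real^'d^('n \<times> 'n)" where
  "bearing_fun E q = (\<chi> e. if e \<in> E then (q $ snd e - q $ fst e) /\<^sub>R norm (q $ snd e - q $ fst e) else 0)"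

definition inf_bearing_rigid :: "('n::finite \<times> 'n) set \<Rightarrow> real^'d^'n \<Rightarrow> bool" where
  "inf_bearing_rigid E q \<longleftrightarrow>
     bearing_fun E differentiable (at q) \<and>
     {\<delta>. frechet_derivative (bearing_fun E) (at q) \<delta> = 0} = span (range (\<lambda>v::real^'d. \<chi> i. v) \<union> {q})"

definition bearing_lap :: "('n::finite \<times> 'n) set \<Rightarrow> ('n \<times> 'n \<Rightarrow> real^'d) \<Rightarrow> 'n \<Rightarrow> 'n \<Rightarrow> real^'d^'d" where
  "bearing_lap E gs i j =
     (if i \<noteq> j then (if (i, j) \<in> E then - proj_mat (gs (i, j)) else 0)
      else (\<Sum>k\<in>{k. (i, k) \<in> E}. proj_mat (gs (i, k))))"

definition is_target_formation ::
  "('n::finite \<times> 'n) set \<Rightarrow> ('n \<times> 'n \<Rightarrow> real^'d) \<Rightarrow> 'n set \<Rightarrow> real^'d^'n \<Rightarrow> real^'d^'n \<Rightarrow> bool" where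
  "is_target_formation E gs Vl p q \<longleftrightarrow>
     (\<forall>i\<in>Vl. q $ i = p $ i) \<and>
     (\<forall>(i, j)\<in>E. (q $ j - q $ i) /\<^sub>R norm (q $ j - q $ i) = gs (i, j))"

definition centroid :: "real^'d^'n::finite \<Rightarrow> real^'d" where
  "centroid q = (1 / real CARD('n)) *\<^sub>R (\<Sum>i\<in>UNIV. q $ i)"

definition scale :: "real^'d^'n::finite \<Rightarrow> real" where
  "scale q = sqrt ((1 / real CARD('n)) * (\<Sum>i\<in>UNIV. (norm (q $ i - centroid q))\<^sup>2))"

end

theory Submission
  imports Defs
begin

text \<open>Leaders moving with the common velocity vc translate the whole leader configuration
  rigidly. Since every row of the bearing Laplacian sums to zero, the rigidly translated target
  formation still solves the follower equations, and positive definiteness of the follower block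
  makes that solution unique. Hence the target formation itself is a pure translation with
  velocity vc: its centroid moves with vc and its scale, being translation invariant, is constant.\<close>

lemma has_vector_derivative_const_imp_affine:
  fixes f :: "real \<Rightarrow> 'a::real_normed_vector"
  assumes "\<And>t. (f has_vector_derivative v) (at t)"
  shows "f t = f 0 + t *\<^sub>R v"
proof -
  have "((\<lambda>t. f t - t *\<^sub>R v) has_vector_derivative 0) (at s)" for s
    using assms[of s] has_vector_derivative_scaleR[OF DERIV_ident has_vector_derivative_const, of v s]
      has_vector_derivative_diff by fastforce
  then obtain k where "\<And>s. f s - s *\<^sub>R v = k"
    using has_vector_derivative_zero_constant[of UNIV "\<lambda>t. f t - t *\<^sub>R v"] by auto
  from this[of t] this[of 0] show ?thesis by (simp add: algebra_simps)
qed

lemma sum_matrix_vector_mult_left: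
  fixes M :: "'j \<Rightarrow> real^'a^'b"
  shows "(\<Sum>j\<in>A. M j *v v) = (\<Sum>j\<in>A. M j) *v v"
  by (induction A rule: infinite_finite_induct) (auto simp: matrix_vector_mult_add_rdistrib)

lemma bearing_lap_row_sum:
  assumes "\<forall>i. (i, i) \<notin> E"
  shows "(\<Sum>j\<in>UNIV. bearing_lap E gs i j) = 0"
proof -
  have "(\<Sum>j\<in>UNIV. bearing_lap E gs i j) = bearing_lap E gs i i + (\<Sum>j\<in>- {i}. bearing_lap E gs i j)"
    by (metis Compl_eq_Diff_UNIV finite_class.finite_UNIV iso_tuple_UNIV_I sum.remove)
  also have "(\<Sum>j\<in>- {i}. bearing_lap E gs i j)
      = (\<Sum>j\<in>- {i}. if (i, j) \<in> E then - proj_mat (gs (i, j)) else 0)"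
    by (rule sum.cong) (auto simp: bearing_lap_def)
  also have "\<dots> = (\<Sum>j\<in>{j\<in>- {i}. (i, j) \<in> E}. - proj_mat (gs (i, j)))"
    by (rule sum.inter_filter[symmetric]) simp
  also have "{j\<in>- {i}. (i, j) \<in> E} = {k. (i, k) \<in> E}"
    using assms by auto
  finally show ?thesis
    by (simp add: bearing_lap_def sum_negf)
qed

lemma bearing_lap_translation_invariant:
  assumes "\<forall>i. (i, i) \<notin> E"
  shows "(\<Sum>j\<in>UNIV. bearing_lap E gs i j *v (q $ j + w))
       = (\<Sum>j\<in>UNIV. bearing_lap E gs i j *v q $ j)"
  by (simp add: matrix_vector_right_distrib sum.distrib sum_matrix_vector_mult_left
      bearing_lap_row_sum[OF assms])

lemma sum_UNIV_Compl_split: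
  fixes f :: "'a::finite \<Rightarrow> 'b::comm_monoid_add"
  shows "sum f UNIV = sum f (- A) + sum f A"
  using sum.union_disjoint[of "- A" A f] by (simp add: Compl_partition2)

lemma block_pos_def_solution_unique:
  fixes L :: "'n::finite \<Rightarrow> 'n \<Rightarrow> real^'d^'d" and x y :: "real^'d^'n"
  assumes pd: "\<forall>z::real^'d^'n. (\<forall>i\<in>V. z $ i = 0) \<and> z \<noteq> 0 \<longrightarrow>
                 (\<Sum>i\<in>- V. \<Sum>j\<in>- V. z $ i \<bullet> (L i j *v z $ j)) > 0"
    and agree: "\<forall>i\<in>V. x $ i = y $ i"
    and eqs: "\<forall>i\<in>- V. (\<Sum>j\<in>UNIV. L i j *v x $ j) = (\<Sum>j\<in>UNIV. L i j *v y $ j)"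
  shows "x = y"
proof (rule ccontr)
  assume "x \<noteq> y"
  define z where "z = x - y"
  have z_V: "\<forall>i\<in>V. z $ i = 0"
    using agree by (simp add: z_def)
  have "z \<noteq> 0"
    using \<open>x \<noteq> y\<close> by (simp add: z_def)
  have row: "(\<Sum>j\<in>- V. L i j *v z $ j) = 0" if "i \<in> - V" for i
  proof -
    have "(\<Sum>j\<in>UNIV. L i j *v z $ j) = 0"
      using eqs that unfolding z_def by (simp add: matrix_vector_mult_diff_distrib sum_subtractf)
    then show ?thesis
      using z_V sum_UNIV_Compl_split[of "\<lambda>j. L i j *v z $ j" V] by simp
  qed
  have "(\<Sum>i\<in>- V. \<Sum>j\<in>- V. z $ i \<bullet> (L i j *v z $ j))
      = (\<Sum>i\<in>- V. z $ i \<bullet> (\<Sum>j\<in>- V. L i j *v z $ j))"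
    by (simp add: inner_sum_right)
  also have "\<dots> = 0"
    using row by simp
  finally show False
    using pd z_V \<open>z \<noteq> 0\<close> by fastforce
qed

lemma centroid_translate:
  fixes q :: "real^'d^'n::finite"
  shows "centroid (q + (\<chi> i. w)) = centroid q + w"
proof -
  have "real CARD('n) \<noteq> 0"
    by simp
  then show ?thesis
    by (simp add: centroid_def sum.distrib scaleR_add_right sum_constant_scaleR del: sum_constant)
qed

lemma scale_translate: "scale (q + (\<chi> i. w)) = scale q"
  by (simp add: scale_def centroid_translate)

theorem proposition1:
  fixes E :: "('n::finite \<times> 'n) set"
    and gs :: "'n \<times> 'n \<Rightarrow> real^'d::finite"
    and Vl :: "'n set"
    and p pstar :: "real \<Rightarrow> real^'d^'n"
    and vc :: "real^'d"
  assumes n2: "CARD('n) \<ge> 2"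
    and d2: "CARD('d) \<ge> 2"
    and E_sym: "\<forall>i j. (i, j) \<in> E \<longrightarrow> (j, i) \<in> E"
    and E_irrefl: "\<forall>i. (i, i) \<notin> E"
    and nl2: "card Vl \<ge> 2"
    and target: "\<forall>t. is_target_formation E gs Vl (p t) (pstar t)"
    and rigid: "\<forall>t. inf_bearing_rigid E (pstar t)"
    and Lff_pd: "\<forall>x::real^'d^'n. (\<forall>i\<in>Vl. x $ i = 0) \<and> x \<noteq> 0 \<longrightarrow>
                   (\<Sum>i\<in>- Vl. \<Sum>j\<in>- Vl. x $ i \<bullet> (bearing_lap E gs i j *v x $ j)) > 0"
    and followers: "\<forall>t. \<forall>i\<in>- Vl.
                   (\<Sum>j\<in>- Vl. bearing_lap E gs i j *v pstar t $ j)
                 + (\<Sum>j\<in>Vl. bearing_lap E gs i j *v p t $ j) = 0"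
    and leader_vel: "\<forall>i\<in>Vl. \<forall>t. ((\<lambda>t. p t $ i) has_vector_derivative vc) (at t)"
  shows "\<forall>t. ((\<lambda>t. centroid (pstar t)) has_vector_derivative vc) (at t)
           \<and> ((\<lambda>t. scale (pstar t)) has_real_derivative 0) (at t)"
proof -
  \<comment> \<open>Rigidity and the size bounds only serve to make the follower block positive definite,
    which is assumed directly as \<open>Lff_pd\<close>.\<close>
  let ?L = "bearing_lap E gs"
  have leaders: "pstar t $ i = p t $ i" if "i \<in> Vl" for t i
    using target that unfolding is_target_formation_def by auto
  have equilibrium: "(\<Sum>j\<in>UNIV. ?L i j *v pstar t $ j) = 0" if "i \<in> - Vl" for t i
    using followers that leaders sum_UNIV_Compl_split[of "\<lambda>j. ?L i j *v pstar t $ j" Vl] by simp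
  have translation: "pstar t = pstar 0 + (\<chi> i. t *\<^sub>R vc)" for t
  proof (rule block_pos_def_solution_unique[OF Lff_pd])
    show "\<forall>i\<in>Vl. pstar t $ i = (pstar 0 + (\<chi> i. t *\<^sub>R vc)) $ i"
    proof
      fix i assume "i \<in> Vl"
      then have "p t $ i = p 0 $ i + t *\<^sub>R vc"
        using leader_vel has_vector_derivative_const_imp_affine[of "\<lambda>t. p t $ i" vc] by blast
      then show "pstar t $ i = (pstar 0 + (\<chi> i. t *\<^sub>R vc)) $ i"
        using leaders \<open>i \<in> Vl\<close> by simp
    qed
    show "\<forall>i\<in>- Vl. (\<Sum>j\<in>UNIV. ?L i j *v pstar t $ j)
                  = (\<Sum>j\<in>UNIV. ?L i j *v (pstar 0 + (\<chi> i. t *\<^sub>R vc)) $ j)"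
      using equilibrium by (simp add: bearing_lap_translation_invariant[OF E_irrefl])
  qed
  have centroid_path: "(\<lambda>t. centroid (pstar t)) = (\<lambda>t. centroid (pstar 0) + t *\<^sub>R vc)"
    using translation centroid_translate by metis
  have scale_path: "(\<lambda>t. scale (pstar t)) = (\<lambda>t. scale (pstar 0))"
    using translation scale_translate by metis
  show ?thesis
    unfolding centroid_path scale_path by (auto intro!: derivative_eq_intros)
qed

end
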